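(* Let $r>0$, $L\ge2$ with $rL\in\mathbb{N}$, and let $\eta^L\sim\nu_L$, the stationary distribution of the RBB process with $L$ bins and $N=rL$ balls. Writing $w_k(\eta):=\mathbf{1}(\eta_k>0)$, $$\mathrm{Cov}\big(w_1(\eta^L),w_2(\eta^L)\big)=-\mathbb{E}\big(w_1(\eta^L)\big)^2+2\,\mathbb{E}\big(w_1(\eta^L)\big)\frac{(r+1)L-1}{L-1}-2r\frac{L}{L-1}.$$
   Context: RBB process with $L$ bins: Markov chain on $\mathbb{Z}_+^L$; with $w(\eta):=(\mathbf{1}(\eta_1>0),\dots,\mathbf{1}(\eta_L>0))$ and $K(\eta):=\sum_j\mathbf{1}(\eta_j>0)$, from state $\eta$ the next state is $\eta-w(\eta)+B(\eta)$ where $B(\eta)$ is multinomial with $K(\eta)$ trials and cell probabilities $(1/L,\dots,1/L)$. It conserves the total number of balls, and restricted to configurations with $N$ balls it is an ergodic finite Markov chain with a unique stationary distribution $\nu_L$, which is exchangeable. *)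

theory Defs
  imports Complex_Main
begin

text \<open>Configurations of the RBB process with L bins (indexed 0..L-1, so the
paper's bins 1 and 2 are 0 and 1) are functions nat \<Rightarrow> nat vanishing from L on.\<close>

definition rbb_states :: "nat \<Rightarrow> nat \<Rightarrow> (nat \<Rightarrow> nat) set" where
  "rbb_states L N = {\<eta>. (\<forall>i\<ge>L. \<eta> i = 0) \<and> (\<Sum>i<L. \<eta> i) = N}"

definition occ :: "(nat \<Rightarrow> nat) \<Rightarrow> nat \<Rightarrow> nat" where
  "occ \<eta> i = (if \<eta> i > 0 then 1 else 0)"

definition nonempty_count :: "nat \<Rightarrow> (nat \<Rightarrow> nat) \<Rightarrow> nat" where
  "nonempty_count L \<eta> = card {i. i < L \<and> 0 < \<eta> i}"

definition multinom_prob :: "nat \<Rightarrow> nat \<Rightarrow> (nat \<Rightarrow> nat) \<Rightarrow> real" where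
  "multinom_prob L k b =
     (if (\<forall>i\<ge>L. b i = 0) \<and> (\<Sum>i<L. b i) = k
      then fact k / (\<Prod>i<L. fact (b i)) / real L ^ k else 0)"

text \<open>Transition probability eta \<rightarrow> eta' = eta - w(eta) + B(eta)\<close>
definition rbb_trans :: "nat \<Rightarrow> (nat \<Rightarrow> nat) \<Rightarrow> (nat \<Rightarrow> nat) \<Rightarrow> real" where
  "rbb_trans L \<eta> \<eta>' =
     (if \<forall>i. \<eta> i \<le> \<eta>' i + occ \<eta> i
      then multinom_prob L (nonempty_count L \<eta>) (\<lambda>i. \<eta>' i + occ \<eta> i - \<eta> i)
      else 0)"

definition rbb_stationary :: "nat \<Rightarrow> nat \<Rightarrow> ((nat \<Rightarrow> nat) \<Rightarrow> real) \<Rightarrow> bool" where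
  "rbb_stationary L N \<nu> \<longleftrightarrow>
     (\<forall>\<eta>\<in>rbb_states L N. 0 \<le> \<nu> \<eta>) \<and>
     (\<Sum>\<eta>\<in>rbb_states L N. \<nu> \<eta>) = 1 \<and>
     (\<forall>\<eta>'\<in>rbb_states L N. \<nu> \<eta>' = (\<Sum>\<eta>\<in>rbb_states L N. \<nu> \<eta> * rbb_trans L \<eta> \<eta>'))"

definition rbb_expect :: "nat \<Rightarrow> nat \<Rightarrow> ((nat \<Rightarrow> nat) \<Rightarrow> real) \<Rightarrow> ((nat \<Rightarrow> nat) \<Rightarrow> real) \<Rightarrow> real" where
  "rbb_expect L N \<nu> f = (\<Sum>\<eta>\<in>rbb_states L N. \<nu> \<eta> * f \<eta>)"

end

theory Submission
  imports Defs "HOL-Combinatorics.Permutations"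
begin

text \<open>
  One step of the chain moves \<eta> to c + B, where c = \<eta> - w(\<eta>) and B is multinomial with
  K = K(\<eta>) trials. The first two multinomial moments show that Q(\<eta>) = \<Sum>i. \<eta>_i^2 has
  one-step drift ((2(L + N) - 1) K - K^2 - 2 N L) / L, which must average to zero under the
  stationary law, so E[K^2] = (2(L + N) - 1) E[K] - 2 N L. The chain is irreducible and its
  kernel commutes with relabelling the bins, so the unique stationary law is exchangeable:
  E[K] = L E[w_1] and E[K^2] = L E[w_1] + L (L - 1) E[w_1 w_2]. Solving for E[w_1 w_2] gives the
  covariance.
\<close>

section \<open>Stationary distributions of finite Markov kernels\<close>

definition stationary_on :: "'a set \<Rightarrow> ('a \<Rightarrow> 'a \<Rightarrow> real) \<Rightarrow> ('a \<Rightarrow> real) \<Rightarrow> bool" where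
  "stationary_on S P \<nu> \<longleftrightarrow>
     (\<forall>x\<in>S. 0 \<le> \<nu> x) \<and> sum \<nu> S = 1 \<and> (\<forall>y\<in>S. \<nu> y = (\<Sum>x\<in>S. \<nu> x * P x y))"

definition positive_step :: "'a set \<Rightarrow> ('a \<Rightarrow> 'a \<Rightarrow> real) \<Rightarrow> 'a \<Rightarrow> 'a \<Rightarrow> bool" where
  "positive_step S P x y \<longleftrightarrow> x \<in> S \<and> y \<in> S \<and> 0 < P x y"

definition irreducible_on :: "'a set \<Rightarrow> ('a \<Rightarrow> 'a \<Rightarrow> real) \<Rightarrow> bool" where
  "irreducible_on S P \<longleftrightarrow> (\<forall>x\<in>S. \<forall>y\<in>S. (positive_step S P)\<^sup>*\<^sup>* x y)"

lemma stationary_on_balance: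
  assumes "stationary_on S P \<nu>"
  shows "(\<Sum>y\<in>S. \<nu> y * f y) = (\<Sum>x\<in>S. \<nu> x * (\<Sum>y\<in>S. P x y * f y))"
proof -
  have "(\<Sum>y\<in>S. \<nu> y * f y) = (\<Sum>y\<in>S. \<Sum>x\<in>S. \<nu> x * (P x y * f y))"
    using assms unfolding stationary_on_def by (simp add: sum_distrib_right mult.assoc)
  also have "\<dots> = (\<Sum>x\<in>S. \<nu> x * (\<Sum>y\<in>S. P x y * f y))"
    by (subst sum.swap) (simp add: sum_distrib_left)
  finally show ?thesis .
qed

lemma stationary_on_pos:
  assumes fin: "finite S" and P: "\<forall>x\<in>S. \<forall>y\<in>S. 0 \<le> P x y" and irr: "irreducible_on S P"
    and st: "stationary_on S P \<nu>" and y: "y \<in> S"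
  shows "0 < \<nu> y"
proof -
  have nonneg: "\<forall>x\<in>S. 0 \<le> \<nu> x" and balance: "\<forall>z\<in>S. \<nu> z = (\<Sum>x\<in>S. \<nu> x * P x z)"
    using st unfolding stationary_on_def by auto
  obtain x0 where x0: "x0 \<in> S" "0 < \<nu> x0"
  proof (rule ccontr)
    assume "\<not> thesis"
    then have "\<forall>x\<in>S. \<nu> x \<le> 0" using that by force
    then have "sum \<nu> S \<le> 0" by (simp add: sum_nonpos)
    moreover have "sum \<nu> S = 1" using st unfolding stationary_on_def by blast
    ultimately show False by simp
  qed
  have "(positive_step S P)\<^sup>*\<^sup>* x0 y" using irr x0(1) y unfolding irreducible_on_def by blast
  then show ?thesis
  proof (induction rule: rtranclp_induct)
    case base then show ?case using x0 by simp
  next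
    case (step z w)
    then have zw: "z \<in> S" "w \<in> S" "0 < P z w" unfolding positive_step_def by auto
    have "\<nu> z * P z w \<le> (\<Sum>x\<in>S. \<nu> x * P x w)"
      by (rule member_le_sum) (use zw nonneg P fin in auto)
    moreover have "0 < \<nu> z * P z w" using step.IH zw by simp
    ultimately show ?case using balance zw by simp
  qed
qed

text \<open>If \<nu> x / \<mu> x is minimal at y, then \<nu> - c \<mu> with c = \<nu> y / \<mu> y is a nonnegative
  invariant measure vanishing at y; invariance propagates the zero backwards along every path
  into y, so by irreducibility \<nu> = c \<mu>, and c = 1 by normalisation.\<close>
lemma stationary_on_unique:
  assumes fin: "finite S" and P: "\<forall>x\<in>S. \<forall>y\<in>S. 0 \<le> P x y" and irr: "irreducible_on S P"
    and st\<nu>: "stationary_on S P \<nu>" and st\<mu>: "stationary_on S P \<mu>" and x: "x \<in> S"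
  shows "\<nu> x = \<mu> x"
proof -
  have \<mu>_pos: "\<And>x. x \<in> S \<Longrightarrow> 0 < \<mu> x" using stationary_on_pos[OF fin P irr st\<mu>] by blast
  define c where "c = Min ((\<lambda>x. \<nu> x / \<mu> x) ` S)"
  have "c \<in> (\<lambda>x. \<nu> x / \<mu> x) ` S" unfolding c_def using fin x by (intro Min_in) auto
  then obtain y where y: "y \<in> S" "c = \<nu> y / \<mu> y" by blast
  define d where "d = (\<lambda>x. \<nu> x - c * \<mu> x)"
  have d_nonneg: "0 \<le> d x" if "x \<in> S" for x
  proof -
    have "c \<le> \<nu> x / \<mu> x" unfolding c_def using fin that by (intro Min_le) auto
    then show ?thesis unfolding d_def using \<mu>_pos[OF that] by (simp add: field_simps)
  qed
  have d_balance: "d z = (\<Sum>w\<in>S. d w * P w z)" if "z \<in> S" for z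
    using st\<nu> st\<mu> that unfolding stationary_on_def d_def
    by (simp add: sum_subtractf sum_distrib_left algebra_simps)
  have "d u = 0" if "(positive_step S P)\<^sup>*\<^sup>* u y" for u
    using that
  proof (induction rule: converse_rtranclp_induct)
    case base then show ?case using y \<mu>_pos[OF y(1)] unfolding d_def by simp
  next
    case (step u z)
    then have uz: "u \<in> S" "z \<in> S" "0 < P u z" unfolding positive_step_def by auto
    have "d u * P u z \<le> (\<Sum>w\<in>S. d w * P w z)"
      by (rule member_le_sum) (use uz d_nonneg P fin in auto)
    then have "d u \<le> 0" using d_balance[OF uz(2)] step.IH uz(3) by (simp add: mult_le_0_iff)
    then show ?case using d_nonneg[OF uz(1)] by simp
  qed
  then have proportional: "\<nu> w = c * \<mu> w" if "w \<in> S" for w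
    using irr that y(1) unfolding irreducible_on_def d_def by simp
  then have "sum \<nu> S = c * sum \<mu> S" by (simp add: sum_distrib_left)
  moreover have "sum \<nu> S = 1" "sum \<mu> S = 1" using st\<nu> st\<mu> unfolding stationary_on_def by blast+
  ultimately have "c = 1" by simp
  then show ?thesis using proportional[OF x] by simp
qed

lemma stationary_on_symmetry_invariant:
  assumes fin: "finite S" and P: "\<forall>x\<in>S. \<forall>y\<in>S. 0 \<le> P x y" and irr: "irreducible_on S P"
    and st: "stationary_on S P \<nu>" and \<sigma>: "bij_betw \<sigma> S S"
    and P\<sigma>: "\<forall>x\<in>S. \<forall>y\<in>S. P (\<sigma> x) (\<sigma> y) = P x y" and x: "x \<in> S"
  shows "\<nu> (\<sigma> x) = \<nu> x"
proof -
  have nonneg: "\<forall>x\<in>S. 0 \<le> \<nu> x" and total: "sum \<nu> S = 1"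
    and balance: "\<forall>y\<in>S. \<nu> y = (\<Sum>x\<in>S. \<nu> x * P x y)"
    using st unfolding stationary_on_def by blast+
  have \<sigma>S: "\<sigma> y \<in> S" if "y \<in> S" for y using \<sigma> that by (meson bij_betwE)
  have sum\<sigma>: "(\<Sum>x\<in>S. g (\<sigma> x)) = (\<Sum>x\<in>S. g x)" for g :: "_ \<Rightarrow> real"
    using sum.reindex_bij_betw[OF \<sigma>] .
  have "(\<nu> \<circ> \<sigma>) y = (\<Sum>x\<in>S. (\<nu> \<circ> \<sigma>) x * P x y)" if y: "y \<in> S" for y
  proof -
    have "(\<nu> \<circ> \<sigma>) y = (\<Sum>x\<in>S. \<nu> (\<sigma> x) * P (\<sigma> x) (\<sigma> y))"
      using balance \<sigma>S[OF y] sum\<sigma>[of "\<lambda>x. \<nu> x * P x (\<sigma> y)"] by simp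
    also have "\<dots> = (\<Sum>x\<in>S. (\<nu> \<circ> \<sigma>) x * P x y)" using P\<sigma> y by simp
    finally show ?thesis .
  qed
  moreover have "sum (\<nu> \<circ> \<sigma>) S = 1" using total sum\<sigma>[of \<nu>] by simp
  moreover have "\<forall>y\<in>S. 0 \<le> (\<nu> \<circ> \<sigma>) y" using nonneg \<sigma>S by simp
  ultimately have "stationary_on S P (\<nu> \<circ> \<sigma>)" unfolding stationary_on_def by blast
  then show ?thesis using stationary_on_unique[OF fin P irr _ st x] by simp
qed

section \<open>Configurations and multinomial moments\<close>

text \<open>The set rbb_states L K of configurations with K balls is also the support of the
  multinomial law multinom_prob L K.\<close>

lemma rbb_states_le: "\<eta> \<in> rbb_states L N \<Longrightarrow> \<eta> i \<le> N"
  unfolding rbb_states_def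
  by (cases "i < L") (auto intro: order.trans[OF member_le_sum[of i "{..<L}" \<eta>]])

lemma finite_rbb_states: "finite (rbb_states L N)"
proof (rule finite_subset)
  show "rbb_states L N \<subseteq> {\<eta>. \<forall>i. (i \<in> {..<L} \<longrightarrow> \<eta> i \<in> {..N}) \<and> (i \<notin> {..<L} \<longrightarrow> \<eta> i = 0)}"
  proof (intro subsetI CollectI allI conjI impI)
    fix \<eta> i assume "\<eta> \<in> rbb_states L N"
    then show "\<eta> i \<in> {..N}" and "i \<notin> {..<L} \<Longrightarrow> \<eta> i = 0"
      using rbb_states_le unfolding rbb_states_def by auto
  qed
  show "finite {\<eta>. \<forall>i. (i \<in> {..<L} \<longrightarrow> \<eta> i \<in> {..N}) \<and> (i \<notin> {..<L} \<longrightarrow> \<eta> i = (0::nat))}"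
    by (rule finite_set_of_finite_funs) simp_all
qed

lemma sum_rbb_states_real: "\<eta> \<in> rbb_states L N \<Longrightarrow> (\<Sum>i<L. real (\<eta> i)) = real N"
  unfolding rbb_states_def by (simp flip: of_nat_sum)

lemma rbb_states_0: "rbb_states L 0 = {\<lambda>_. 0}"
  unfolding rbb_states_def by (auto simp: fun_eq_iff) (metis lessThan_iff not_less)

lemma add_ball_in_rbb_states:
  "b \<in> rbb_states L K \<Longrightarrow> j < L \<Longrightarrow> (\<lambda>i. b i + of_bool (i = j)) \<in> rbb_states L (Suc K)"
  unfolding rbb_states_def by (simp add: sum.distrib)

lemma multinom_prob_nonneg: "0 \<le> multinom_prob L K b"
  unfolding multinom_prob_def by (simp add: prod_nonneg)

lemma multinom_prob_rbb_states:
  "b \<in> rbb_states L K \<Longrightarrow> multinom_prob L K b = fact K / (\<Prod>i<L. fact (b i)) / real L ^ K"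
  unfolding multinom_prob_def rbb_states_def by simp

lemma multinom_prob_pos: "0 < L \<Longrightarrow> b \<in> rbb_states L K \<Longrightarrow> 0 < multinom_prob L K b"
  by (simp add: multinom_prob_rbb_states prod_pos)

lemma multinom_prob_add_ball:
  assumes L: "0 < L" and b: "b \<in> rbb_states L K" and j: "j < L"
  shows "real (Suc (b j)) * multinom_prob L (Suc K) (\<lambda>i. b i + of_bool (i = j))
       = real (Suc K) * multinom_prob L K b / real L"
proof -
  define rest where "rest = (\<Prod>i\<in>{..<L}-{j}. (fact (b i) :: real))"
  have "(\<Prod>i\<in>{..<L}-{j}. (fact (b i + of_bool (i = j)) :: real)) = rest"
    unfolding rest_def by (rule prod.cong) auto
  then have "(\<Prod>i<L. fact (b i + of_bool (i = j))) = real (Suc (b j)) * fact (b j) * rest"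
    using prod.remove[of "{..<L}" j "\<lambda>i. (fact (b i + of_bool (i = j)) :: real)"] j
    by (simp add: fact_Suc)
  moreover have "(\<Prod>i<L. fact (b i)) = (fact (b j) :: real) * rest"
    using prod.remove[of "{..<L}" j "\<lambda>i. (fact (b i) :: real)"] j unfolding rest_def by simp
  moreover have "0 < rest" unfolding rest_def by (simp add: prod_pos)
  ultimately show ?thesis
    using L unfolding multinom_prob_rbb_states[OF b] multinom_prob_rbb_states[OF add_ball_in_rbb_states[OF b j]]
    by (simp add: fact_Suc[of K] divide_simps del: of_nat_Suc)
qed

lemma sum_multinom_prob_add_ball:
  assumes L: "0 < L" and j: "j < L"
  shows "real (Suc K) * (\<Sum>b\<in>rbb_states L K. multinom_prob L K b * g (\<lambda>i. b i + of_bool (i = j)))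
       = real L * (\<Sum>b\<in>rbb_states L (Suc K). multinom_prob L (Suc K) b * real (b j) * g b)"
proof -
  define add where "add = (\<lambda>(b::nat \<Rightarrow> nat) i. b i + of_bool (i = j))"
  have inj: "inj_on add (rbb_states L K)"
    unfolding add_def inj_on_def by (auto simp: fun_eq_iff)
  have image: "add ` rbb_states L K = {b \<in> rbb_states L (Suc K). 0 < b j}"
  proof
    show "add ` rbb_states L K \<subseteq> {b \<in> rbb_states L (Suc K). 0 < b j}"
      using add_ball_in_rbb_states j unfolding add_def by auto
  next
    show "{b \<in> rbb_states L (Suc K). 0 < b j} \<subseteq> add ` rbb_states L K"
    proof safe
      fix b assume b: "b \<in> rbb_states L (Suc K)" "0 < b j"
      define c where "c = b(j := b j - 1)"
      have bc: "b = add c" using b(2) unfolding add_def c_def by (auto simp: fun_eq_iff)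
      have "(\<Sum>i<L. b i) = Suc (\<Sum>i<L. c i)" using bc j by (simp add: add_def sum.distrib)
      then have "c \<in> rbb_states L K" using b j unfolding rbb_states_def c_def by auto
      then show "b \<in> add ` rbb_states L K" using bc by blast
    qed
  qed
  have "real L * (\<Sum>b\<in>rbb_states L (Suc K). multinom_prob L (Suc K) b * real (b j) * g b)
      = real L * (\<Sum>b\<in>add ` rbb_states L K. multinom_prob L (Suc K) b * real (b j) * g b)"
    unfolding image by (intro arg_cong[where f="(*) _"] sum.mono_neutral_right finite_rbb_states) auto
  also have "\<dots> = (\<Sum>b\<in>rbb_states L K. real L * (real (Suc (b j)) * multinom_prob L (Suc K) (add b)) * g (add b))"
    by (simp add: sum.reindex[OF inj] sum_distrib_left) (simp add: add_def mult_ac)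
  also have "\<dots> = (\<Sum>b\<in>rbb_states L K. real (Suc K) * multinom_prob L K b * g (add b))"
    using multinom_prob_add_ball[OF L _ j] L unfolding add_def by (intro sum.cong) auto
  finally show ?thesis by (simp add: sum_distrib_left add_def mult_ac)
qed

text \<open>A multinomial vector with K + 1 trials is one with K trials plus a ball in a uniformly
  chosen bin.\<close>
lemma sum_multinom_prob_Suc:
  assumes L: "0 < L"
  shows "(\<Sum>b\<in>rbb_states L (Suc K). multinom_prob L (Suc K) b * g b)
       = (\<Sum>b\<in>rbb_states L K. multinom_prob L K b * (\<Sum>j<L. g (\<lambda>i. b i + of_bool (i = j)))) / real L"
proof -
  have "real (Suc K) * (\<Sum>b\<in>rbb_states L K. multinom_prob L K b * (\<Sum>j<L. g (\<lambda>i. b i + of_bool (i = j))))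
      = (\<Sum>j<L. real (Suc K) * (\<Sum>b\<in>rbb_states L K. multinom_prob L K b * g (\<lambda>i. b i + of_bool (i = j))))"
    by (simp add: sum_distrib_left sum.swap[of _ "rbb_states L K"])
  also have "\<dots> = (\<Sum>j<L. real L * (\<Sum>b\<in>rbb_states L (Suc K). multinom_prob L (Suc K) b * real (b j) * g b))"
    using sum_multinom_prob_add_ball[OF L] by simp
  also have "\<dots> = real L * (\<Sum>b\<in>rbb_states L (Suc K). multinom_prob L (Suc K) b * g b * (\<Sum>j<L. real (b j)))"
    by (simp add: sum_distrib_left sum.swap[of _ "{..<L}"] mult_ac)
  also have "\<dots> = real L * real (Suc K) * (\<Sum>b\<in>rbb_states L (Suc K). multinom_prob L (Suc K) b * g b)"
    using sum_rbb_states_real by (simp add: sum_distrib_left mult_ac cong: sum.cong)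
  finally show ?thesis using L by (simp add: field_simps del: of_nat_Suc)
qed

lemma sum_multinom_prob: "0 < L \<Longrightarrow> (\<Sum>b\<in>rbb_states L K. multinom_prob L K b) = 1"
proof (induction K)
  case 0
  then show ?case by (simp add: rbb_states_0 multinom_prob_def)
next
  case (Suc K)
  then show ?case using sum_multinom_prob_Suc[OF Suc.prems, of K "\<lambda>_. 1"] by (simp flip: sum_distrib_right)
qed

lemma multinom_prob_mean:
  assumes L: "0 < L" and i: "i < L"
  shows "(\<Sum>b\<in>rbb_states L K. multinom_prob L K b * real (b i)) = real K / real L"
proof (induction K)
  case 0
  then show ?case by (simp add: rbb_states_0 multinom_prob_def)
next
  case (Suc K)
  have "(\<Sum>j<L. real (b i + of_bool (i = j))) = real L * real (b i) + 1" for b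
    using i by (simp add: sum.distrib)
  then have "(\<Sum>b\<in>rbb_states L (Suc K). multinom_prob L (Suc K) b * real (b i))
      = (\<Sum>b\<in>rbb_states L K. multinom_prob L K b * (real L * real (b i) + 1)) / real L"
    using sum_multinom_prob_Suc[OF L, of K "\<lambda>b. real (b i)"] by simp
  also have "\<dots> = (real L * (\<Sum>b\<in>rbb_states L K. multinom_prob L K b * real (b i))
        + (\<Sum>b\<in>rbb_states L K. multinom_prob L K b)) / real L"
    by (simp add: distrib_left sum.distrib sum_distrib_left mult_ac)
  also have "\<dots> = real (Suc K) / real L"
    unfolding Suc.IH sum_multinom_prob[OF L] using L by (simp add: field_simps)
  finally show ?case .
qed

lemma multinom_prob_sum_squares:
  assumes L: "0 < L"
  shows "(\<Sum>b\<in>rbb_states L K. multinom_prob L K b * (\<Sum>i<L. real (b i) ^ 2))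
       = real K + real K * (real K - 1) / real L"
proof (induction K)
  case 0
  then show ?case by (simp add: rbb_states_0 multinom_prob_def)
next
  case (Suc K)
  have "(\<Sum>j<L. \<Sum>i<L. real (b i + of_bool (i = j)) ^ 2)
      = real L * (\<Sum>i<L. real (b i) ^ 2) + 2 * real K + real L" if "b \<in> rbb_states L K" for b
  proof -
    have "(\<Sum>i<L. real (b i + of_bool (i = j)) ^ 2) = (\<Sum>i<L. real (b i) ^ 2) + 2 * real (b j) + 1"
      if "j < L" for j
    proof -
      have "real (b i + of_bool (i = j)) ^ 2 = real (b i) ^ 2 + (if i = j then 2 * real (b j) + 1 else 0)"
        for i by (cases "i = j") (simp_all add: power2_eq_square algebra_simps)
      then show ?thesis using that by (simp add: sum.distrib)
    qed
    then show ?thesis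
      using sum_rbb_states_real[OF that] by (simp add: sum.distrib sum_distrib_left[symmetric])
  qed
  then have "(\<Sum>b\<in>rbb_states L (Suc K). multinom_prob L (Suc K) b * (\<Sum>i<L. real (b i) ^ 2))
      = (\<Sum>b\<in>rbb_states L K. multinom_prob L K b
           * (real L * (\<Sum>i<L. real (b i) ^ 2) + 2 * real K + real L)) / real L"
    using sum_multinom_prob_Suc[OF L, of K "\<lambda>b. \<Sum>i<L. real (b i) ^ 2"] by (simp cong: sum.cong)
  also have "\<dots> = (real L * (\<Sum>b\<in>rbb_states L K. multinom_prob L K b * (\<Sum>i<L. real (b i) ^ 2))
        + (2 * real K + real L) * (\<Sum>b\<in>rbb_states L K. multinom_prob L K b)) / real L"
    by (simp add: distrib_left sum.distrib sum_distrib_left mult_ac)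
  also have "\<dots> = real (Suc K) + real (Suc K) * (real (Suc K) - 1) / real L"
    unfolding Suc.IH sum_multinom_prob[OF L] using L by (simp add: field_simps)
  finally show ?case .
qed

section \<open>The RBB transition kernel\<close>

lemma occ_le: "occ \<eta> i \<le> \<eta> i"
  by (simp add: occ_def)

lemma occ_eq_0: "\<eta> \<in> rbb_states L N \<Longrightarrow> L \<le> i \<Longrightarrow> occ \<eta> i = 0"
  unfolding rbb_states_def occ_def by auto

lemma nonempty_count_eq_sum: "nonempty_count L \<eta> = (\<Sum>i<L. occ \<eta> i)"
proof -
  have "{i. i < L \<and> 0 < \<eta> i} = {i\<in>{..<L}. 0 < \<eta> i}" by auto
  then show ?thesis unfolding nonempty_count_def occ_def by (simp flip: sum.inter_filter)
qed

lemma rbb_trans_nonneg: "0 \<le> rbb_trans L \<eta> \<eta>'"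
  unfolding rbb_trans_def by (simp add: multinom_prob_nonneg)

lemma rbb_move_in_rbb_states:
  assumes \<eta>: "\<eta> \<in> rbb_states L N" and \<eta>': "\<eta>' \<in> rbb_states L N"
    and le: "\<forall>i. \<eta> i \<le> \<eta>' i + occ \<eta> i"
  shows "(\<lambda>i. \<eta>' i + occ \<eta> i - \<eta> i) \<in> rbb_states L (nonempty_count L \<eta>)"
proof -
  have "(\<Sum>i<L. \<eta>' i + occ \<eta> i - \<eta> i) + (\<Sum>i<L. \<eta> i) = (\<Sum>i<L. \<eta>' i) + (\<Sum>i<L. occ \<eta> i)"
    unfolding sum.distrib[symmetric] using le by (intro sum.cong) auto
  then show ?thesis
    using \<eta> \<eta>' occ_eq_0[OF \<eta>] unfolding rbb_states_def nonempty_count_eq_sum by auto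
qed

lemma rbb_trans_pos:
  assumes "0 < L" and "\<eta> \<in> rbb_states L N" and "\<eta>' \<in> rbb_states L N"
    and le: "\<forall>i. \<eta> i \<le> \<eta>' i + occ \<eta> i"
  shows "0 < rbb_trans L \<eta> \<eta>'"
  unfolding rbb_trans_def using le multinom_prob_pos[OF assms(1) rbb_move_in_rbb_states[OF assms(2-4)]]
  by simp

lemma sum_rbb_trans:
  assumes \<eta>: "\<eta> \<in> rbb_states L N"
  shows "(\<Sum>\<eta>'\<in>rbb_states L N. rbb_trans L \<eta> \<eta>' * G \<eta>')
       = (\<Sum>b\<in>rbb_states L (nonempty_count L \<eta>).
            multinom_prob L (nonempty_count L \<eta>) b * G (\<lambda>i. \<eta> i - occ \<eta> i + b i))"
proof -
  define K where "K = nonempty_count L \<eta>"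
  define move where "move = (\<lambda>b i. \<eta> i - occ \<eta> i + (b::nat \<Rightarrow> nat) i)"
  have move_occ: "move b i + occ \<eta> i = \<eta> i + b i" for b i
    using occ_le[of \<eta> i] unfolding move_def by simp
  have inj: "inj_on move (rbb_states L K)"
    unfolding move_def inj_on_def by (auto simp: fun_eq_iff)
  have move_in: "move b \<in> rbb_states L N" if b: "b \<in> rbb_states L K" for b
  proof -
    have "(\<Sum>i<L. move b i) + (\<Sum>i<L. occ \<eta> i) = (\<Sum>i<L. \<eta> i) + (\<Sum>i<L. b i)"
      unfolding sum.distrib[symmetric] move_occ ..
    then show ?thesis
      using b \<eta> unfolding rbb_states_def K_def nonempty_count_eq_sum move_def by auto
  qed
  have "(\<Sum>\<eta>'\<in>rbb_states L N. rbb_trans L \<eta> \<eta>' * G \<eta>')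
      = (\<Sum>\<eta>'\<in>move ` rbb_states L K. rbb_trans L \<eta> \<eta>' * G \<eta>')"
  proof (rule sum.mono_neutral_right[OF finite_rbb_states], rule_tac [2] ballI)
    show "move ` rbb_states L K \<subseteq> rbb_states L N" using move_in by blast
  next
    fix \<eta>' assume "\<eta>' \<in> rbb_states L N - move ` rbb_states L K"
    then have \<eta>': "\<eta>' \<in> rbb_states L N" "\<eta>' \<notin> move ` rbb_states L K" by auto
    show "rbb_trans L \<eta> \<eta>' * G \<eta>' = 0"
    proof (cases "\<forall>i. \<eta> i \<le> \<eta>' i + occ \<eta> i")
      case True
      then have "\<eta>' = move (\<lambda>i. \<eta>' i + occ \<eta> i - \<eta> i)"
        unfolding move_def using occ_le[of \<eta>] by (auto simp: fun_eq_iff)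
      then show ?thesis using rbb_move_in_rbb_states[OF \<eta> \<eta>'(1) True] \<eta>'(2) unfolding K_def by blast
    qed (auto simp: rbb_trans_def)
  qed
  also have "\<dots> = (\<Sum>b\<in>rbb_states L K. rbb_trans L \<eta> (move b) * G (move b))"
    by (simp add: sum.reindex[OF inj])
  also have "\<dots> = (\<Sum>b\<in>rbb_states L K. multinom_prob L K b * G (move b))"
  proof (rule sum.cong[OF refl])
    fix b
    have "\<forall>i. \<eta> i \<le> move b i + occ \<eta> i" and "(\<lambda>i. move b i + occ \<eta> i - \<eta> i) = b"
      by (simp_all add: move_occ)
    then show "rbb_trans L \<eta> (move b) * G (move b) = multinom_prob L K b * G (move b)"
      unfolding rbb_trans_def K_def by simp
  qed
  finally show ?thesis unfolding move_def K_def .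
qed

text \<open>With c = \<eta> - w(\<eta>) the next state is c + B, and E[\<Sum>i. (c_i + B_i)^2] follows from the
  multinomial moments, using \<Sum>i. c_i = N - K and \<Sum>i. c_i^2 = Q(\<eta>) - 2 N + K (as w_i^2 = w_i and
  \<eta>_i w_i = \<eta>_i).\<close>
lemma rbb_trans_sum_squares:
  assumes L: "0 < L" and \<eta>: "\<eta> \<in> rbb_states L N"
  defines "K \<equiv> real (nonempty_count L \<eta>)"
  shows "(\<Sum>\<eta>'\<in>rbb_states L N. rbb_trans L \<eta> \<eta>' * (\<Sum>i<L. real (\<eta>' i) ^ 2))
       = (\<Sum>i<L. real (\<eta> i) ^ 2) + ((2 * real (L + N) - 1) * K - K\<^sup>2 - 2 * real N * real L) / real L"
proof -
  define c where "c i = real (\<eta> i) - real (occ \<eta> i)" for i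
  define mp where "mp = multinom_prob L (nonempty_count L \<eta>)"
  define B where "B = rbb_states L (nonempty_count L \<eta>)"
  have K: "K = (\<Sum>i<L. real (occ \<eta> i))" unfolding K_def nonempty_count_eq_sum by simp
  have sum_c: "(\<Sum>i<L. c i) = real N - K"
    unfolding c_def K sum_subtractf sum_rbb_states_real[OF \<eta>] ..
  have "c i ^ 2 = real (\<eta> i) ^ 2 - 2 * real (\<eta> i) + real (occ \<eta> i)" for i
    unfolding c_def occ_def by (simp add: power2_eq_square algebra_simps)
  then have sum_c2: "(\<Sum>i<L. c i ^ 2) = (\<Sum>i<L. real (\<eta> i) ^ 2) - 2 * real N + K"
    by (simp add: K sum.distrib sum_subtractf sum_distrib_left[symmetric] sum_rbb_states_real[OF \<eta>])
  have "(\<Sum>\<eta>'\<in>rbb_states L N. rbb_trans L \<eta> \<eta>' * (\<Sum>i<L. real (\<eta>' i) ^ 2))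
      = (\<Sum>b\<in>B. mp b * (\<Sum>i<L. (c i + real (b i)) ^ 2))"
    unfolding sum_rbb_trans[OF \<eta>] B_def mp_def c_def of_nat_add of_nat_diff[OF occ_le] ..
  also have "\<dots> = (\<Sum>i<L. c i ^ 2) * (\<Sum>b\<in>B. mp b)
      + 2 * (\<Sum>i<L. c i * (\<Sum>b\<in>B. mp b * real (b i))) + (\<Sum>b\<in>B. mp b * (\<Sum>i<L. real (b i) ^ 2))"
    by (simp add: power2_sum sum.distrib distrib_left sum_distrib_left sum_distrib_right
        sum.swap[of _ B] mult_ac)
  also have "\<dots> = (\<Sum>i<L. c i ^ 2) + 2 * (\<Sum>i<L. c i * (K / real L)) + (K + K * (K - 1) / real L)"
    using sum_multinom_prob[OF L] multinom_prob_sum_squares[OF L]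
      sum.cong[OF refl, of "{..<L}" "\<lambda>i. c i * (\<Sum>b\<in>B. mp b * real (b i))" "\<lambda>i. c i * (K / real L)"]
    unfolding B_def mp_def K_def by (simp add: multinom_prob_mean[OF L])
  also have "\<dots> = (\<Sum>i<L. c i ^ 2) + 2 * (K / real L) * (\<Sum>i<L. c i) + (K + K * (K - 1) / real L)"
    by (simp add: sum_distrib_left sum_distrib_right sum_divide_distrib[symmetric] mult_ac)
  also have "\<dots> = (\<Sum>i<L. real (\<eta> i) ^ 2)
      + ((2 * real (L + N) - 1) * K - K\<^sup>2 - 2 * real N * real L) / real L"
    unfolding sum_c sum_c2 using L by (simp add: field_simps power2_eq_square)
  finally show ?thesis .
qed

section \<open>Irreducibility\<close>

lemma rbb_states_eq_concentrated:
  assumes x: "x \<in> rbb_states L N" and L: "0 < L" and zero: "\<forall>i. i \<noteq> 0 \<longrightarrow> x i = 0"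
  shows "x = (\<lambda>_. 0)(0 := N)"
proof -
  have "(\<Sum>i<L. x i) = (\<Sum>i<L. if i = 0 then x 0 else 0)" by (rule sum.cong) (use zero in auto)
  then have "x 0 = N" using x L unfolding rbb_states_def by simp
  then show ?thesis using zero by (auto simp: fun_eq_iff)
qed

text \<open>Throwing all K(x) redistributed balls into bin 0 is a possible move, and it strictly
  increases the content of bin 0 unless x is already concentrated there.\<close>
lemma rbb_reaches_concentrated:
  assumes L: "0 < L"
  shows "x \<in> rbb_states L N \<Longrightarrow> (positive_step (rbb_states L N) (rbb_trans L))\<^sup>*\<^sup>* x ((\<lambda>_. 0)(0 := N))"
proof (induction "N - x 0" arbitrary: x rule: less_induct)
  case less
  show ?case
  proof (cases "\<forall>i. i \<noteq> 0 \<longrightarrow> x i = 0")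
    case True
    then show ?thesis using rbb_states_eq_concentrated[OF less.prems L] by simp
  next
    case False
    then obtain i where i0: "i \<noteq> 0" and xi: "0 < x i" by auto
    have iL: "i < L" using less.prems xi unfolding rbb_states_def by (cases "i < L") auto
    define K where "K = nonempty_count L x"
    define x' where "x' = (\<lambda>j. x j - occ x j + (if j = 0 then K else 0))"
    have x'_occ: "x' j + occ x j = x j + (if j = 0 then K else 0)" for j
      unfolding x'_def using occ_le[of x j] by simp
    have "(\<Sum>j<L. x' j) + (\<Sum>j<L. occ x j) = (\<Sum>j<L. x j) + (\<Sum>j<L. if j = 0 then K else 0)"
      unfolding sum.distrib[symmetric] using x'_occ by simp
    then have "(\<Sum>j<L. x' j) = N"
      using less.prems L unfolding rbb_states_def K_def nonempty_count_eq_sum by simp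
    moreover have "\<forall>j\<ge>L. x' j = 0" using less.prems L unfolding x'_def rbb_states_def occ_def by auto
    ultimately have x': "x' \<in> rbb_states L N" unfolding rbb_states_def by simp
    have "\<forall>j. x j \<le> x' j + occ x j" using x'_occ by simp
    then have step: "positive_step (rbb_states L N) (rbb_trans L) x x'"
      unfolding positive_step_def using less.prems x' rbb_trans_pos[OF L less.prems x'] by auto
    have "(\<Sum>j\<in>{0, i}. occ x j) \<le> (\<Sum>j<L. occ x j)" by (rule sum_mono2) (use iL L in auto)
    then have "occ x 0 + 1 \<le> K" using i0 xi unfolding K_def nonempty_count_eq_sum by (simp add: occ_def)
    then have "x 0 < x' 0" unfolding x'_def using occ_le[of x 0] by simp
    with rbb_states_le[OF x', of 0] have "N - x' 0 < N - x 0" by simp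
    then show ?thesis using less.hyps x' step by (meson converse_rtranclp_into_rtranclp)
  qed
qed

text \<open>Conversely, a configuration x with a ball in bin j \<noteq> 0 is reached in one move from x with
  that ball shifted to bin 0: the ball leaving bin 0 lands in bin j, every other departing ball
  returns to its own bin.\<close>
lemma rbb_reached_from_concentrated:
  assumes L: "0 < L"
  shows "x \<in> rbb_states L N \<Longrightarrow> (positive_step (rbb_states L N) (rbb_trans L))\<^sup>*\<^sup>* ((\<lambda>_. 0)(0 := N)) x"
proof (induction "N - x 0" arbitrary: x rule: less_induct)
  case less
  show ?case
  proof (cases "\<forall>i. i \<noteq> 0 \<longrightarrow> x i = 0")
    case True
    then show ?thesis using rbb_states_eq_concentrated[OF less.prems L] by simp
  next
    case False
    then obtain j where j0: "j \<noteq> 0" and xj: "0 < x j" by auto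
    have jL: "j < L" using less.prems xj unfolding rbb_states_def by (cases "j < L") auto
    define y where "y = x(0 := x 0 + 1, j := x j - 1)"
    have "y i + of_bool (i = j) = x i + of_bool (i = 0)" for i
      unfolding y_def using j0 xj by auto
    then have "(\<Sum>i<L. y i) + (\<Sum>i<L. of_bool (i = j)) = (\<Sum>i<L. x i) + (\<Sum>i<L. of_bool (i = 0))"
      unfolding sum.distrib[symmetric] by simp
    then have "(\<Sum>i<L. y i) = N" using less.prems L jL unfolding rbb_states_def by simp
    moreover have "\<forall>i\<ge>L. y i = 0" using less.prems L jL unfolding y_def rbb_states_def by auto
    ultimately have y: "y \<in> rbb_states L N" unfolding rbb_states_def by simp
    have "\<forall>i. y i \<le> x i + occ y i" unfolding y_def using j0 by (auto simp: occ_def)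
    then have step: "positive_step (rbb_states L N) (rbb_trans L) y x"
      unfolding positive_step_def using less.prems y rbb_trans_pos[OF L y less.prems] by auto
    have "y 0 = x 0 + 1" unfolding y_def using j0 by simp
    with rbb_states_le[OF y, of 0] have "N - y 0 < N - x 0" by simp
    then show ?thesis using less.hyps y step by (meson rtranclp.rtrancl_into_rtrancl)
  qed
qed

lemma rbb_irreducible: "0 < L \<Longrightarrow> irreducible_on (rbb_states L N) (rbb_trans L)"
  unfolding irreducible_on_def
  using rbb_reaches_concentrated rbb_reached_from_concentrated by (metis rtranclp_trans)

section \<open>Exchangeability of the stationary distribution\<close>

lemma rbb_states_permute:
  assumes p: "p permutes {..<L}" and \<eta>: "\<eta> \<in> rbb_states L N"
  shows "\<eta> \<circ> p \<in> rbb_states L N"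
  using \<eta> sum.permute[OF p, of \<eta>] permutes_not_in[OF p] unfolding rbb_states_def by auto

lemma bij_betw_rbb_states_permute:
  assumes p: "p permutes {..<L}"
  shows "bij_betw (\<lambda>\<eta>. \<eta> \<circ> p) (rbb_states L N) (rbb_states L N)"
proof (rule bij_betw_byWitness[where f'="\<lambda>\<eta>. \<eta> \<circ> inv p"])
  show "(\<lambda>\<eta>. \<eta> \<circ> p) ` rbb_states L N \<subseteq> rbb_states L N"
    using rbb_states_permute[OF p] by blast
  show "(\<lambda>\<eta>. \<eta> \<circ> inv p) ` rbb_states L N \<subseteq> rbb_states L N"
    using rbb_states_permute[OF permutes_inv[OF p]] by blast
qed (simp_all add: comp_assoc permutes_inv_o[OF p])

lemma occ_comp: "occ (\<eta> \<circ> p) i = occ \<eta> (p i)"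
  by (simp add: occ_def)

lemma nonempty_count_permute:
  assumes p: "p permutes {..<L}"
  shows "nonempty_count L (\<eta> \<circ> p) = nonempty_count L \<eta>"
  unfolding nonempty_count_eq_sum occ_comp using sum.permute[OF p, of "occ \<eta>"] by (simp add: comp_def)

lemma multinom_prob_permute:
  assumes p: "p permutes {..<L}"
  shows "multinom_prob L K (b \<circ> p) = multinom_prob L K b"
proof -
  have "(\<forall>i\<ge>L. (b \<circ> p) i = 0) \<longleftrightarrow> (\<forall>i\<ge>L. b i = 0)" using permutes_not_in[OF p] by simp
  moreover have "(\<Sum>i<L. (b \<circ> p) i) = (\<Sum>i<L. b i)" using sum.permute[OF p, of b] by simp
  moreover have "(\<Prod>i<L. fact ((b \<circ> p) i)) = (\<Prod>i<L. fact (b i) :: real)"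
    unfolding comp_def using prod.permute[OF p, of "\<lambda>i. fact (b i)", unfolded comp_def] by (rule sym)
  ultimately show ?thesis unfolding multinom_prob_def by (simp only:)
qed

lemma rbb_trans_permute:
  assumes p: "p permutes {..<L}"
  shows "rbb_trans L (x \<circ> p) (y \<circ> p) = rbb_trans L x y"
proof -
  have "(\<forall>i. Q (p i)) \<longleftrightarrow> (\<forall>i. Q i)" for Q :: "nat \<Rightarrow> bool"
    using permutes_surj[OF p] by (metis surjD)
  then have "(\<forall>i. (x \<circ> p) i \<le> (y \<circ> p) i + occ (x \<circ> p) i) \<longleftrightarrow> (\<forall>i. x i \<le> y i + occ x i)"
    by (simp add: occ_comp)
  moreover have "(\<lambda>i. (y \<circ> p) i + occ (x \<circ> p) i - (x \<circ> p) i) = (\<lambda>i. y i + occ x i - x i) \<circ> p"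
    by (auto simp: occ_def)
  ultimately show ?thesis
    unfolding rbb_trans_def nonempty_count_permute[OF p] by (simp only: multinom_prob_permute[OF p])
qed

lemma rbb_stationary_iff: "rbb_stationary L N \<nu> \<longleftrightarrow> stationary_on (rbb_states L N) (rbb_trans L) \<nu>"
  unfolding rbb_stationary_def stationary_on_def ..

lemma rbb_stationary_permute:
  assumes L: "0 < L" and st: "rbb_stationary L N \<nu>" and p: "p permutes {..<L}"
    and \<eta>: "\<eta> \<in> rbb_states L N"
  shows "\<nu> (\<eta> \<circ> p) = \<nu> \<eta>"
proof -
  have "\<forall>x\<in>rbb_states L N. \<forall>y\<in>rbb_states L N. 0 \<le> rbb_trans L x y"
    and "\<forall>x\<in>rbb_states L N. \<forall>y\<in>rbb_states L N. rbb_trans L (x \<circ> p) (y \<circ> p) = rbb_trans L x y"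
    using rbb_trans_nonneg rbb_trans_permute[OF p] by blast+
  from stationary_on_symmetry_invariant[OF finite_rbb_states this(1) rbb_irreducible[OF L]
      st[unfolded rbb_stationary_iff] bij_betw_rbb_states_permute[OF p] this(2) \<eta>]
  show ?thesis .
qed

lemma rbb_expect_permute:
  assumes L: "0 < L" and st: "rbb_stationary L N \<nu>" and p: "p permutes {..<L}"
  shows "rbb_expect L N \<nu> (\<lambda>\<eta>. f (\<eta> \<circ> p)) = rbb_expect L N \<nu> f"
proof -
  have "rbb_expect L N \<nu> (\<lambda>\<eta>. f (\<eta> \<circ> p)) = (\<Sum>\<eta>\<in>rbb_states L N. \<nu> (\<eta> \<circ> p) * f (\<eta> \<circ> p))"
    unfolding rbb_expect_def using rbb_stationary_permute[OF L st p] by simp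
  also have "\<dots> = rbb_expect L N \<nu> f"
    unfolding rbb_expect_def by (rule sum.reindex_bij_betw[OF bij_betw_rbb_states_permute[OF p]])
  finally show ?thesis .
qed

lemma rbb_expect_occ:
  assumes "0 < L" and "rbb_stationary L N \<nu>" and i: "i < L"
  shows "rbb_expect L N \<nu> (\<lambda>\<eta>. real (occ \<eta> i)) = rbb_expect L N \<nu> (\<lambda>\<eta>. real (occ \<eta> 0))"
  using rbb_expect_permute[OF assms(1,2), of "transpose 0 i" "\<lambda>\<eta>. real (occ \<eta> 0)"] assms
  by (simp add: permutes_swap_id occ_comp)

lemma rbb_expect_occ_pair:
  assumes L: "1 < L" and st: "rbb_stationary L N \<nu>" and ij: "i < L" "j < L" "i \<noteq> j"
  shows "rbb_expect L N \<nu> (\<lambda>\<eta>. real (occ \<eta> i) * real (occ \<eta> j))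
       = rbb_expect L N \<nu> (\<lambda>\<eta>. real (occ \<eta> 0) * real (occ \<eta> 1))"
proof -
  define j' where "j' = transpose 0 i j"
  define p where "p = transpose 0 i \<circ> transpose 1 j'"
  have "j' < L" "j' \<noteq> 0" using ij unfolding j'_def transpose_def by auto
  then have "p permutes {..<L}" "p 0 = i" "p 1 = j"
    unfolding p_def using L ij by (auto simp: j'_def permutes_compose permutes_swap_id)
  then show ?thesis
    using rbb_expect_permute[OF _ st, of p "\<lambda>\<eta>. real (occ \<eta> 0) * real (occ \<eta> 1)"] L
    by (simp add: occ_comp)
qed

section \<open>Moments of the number of occupied bins\<close>

lemma rbb_expect_sum:
  "rbb_expect L N \<nu> (\<lambda>\<eta>. \<Sum>i\<in>I. f i \<eta>) = (\<Sum>i\<in>I. rbb_expect L N \<nu> (f i))"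
  unfolding rbb_expect_def by (simp add: sum_distrib_left sum.swap[of _ I])

lemma rbb_expect_nonempty_count:
  assumes "0 < L" and "rbb_stationary L N \<nu>"
  shows "rbb_expect L N \<nu> (\<lambda>\<eta>. real (nonempty_count L \<eta>))
       = real L * rbb_expect L N \<nu> (\<lambda>\<eta>. real (occ \<eta> 0))"
proof -
  have "(\<Sum>i<L. rbb_expect L N \<nu> (\<lambda>\<eta>. real (occ \<eta> i)))
      = (\<Sum>i<L. rbb_expect L N \<nu> (\<lambda>\<eta>. real (occ \<eta> 0)))"
    by (intro sum.cong refl rbb_expect_occ[OF assms]) simp
  then show ?thesis unfolding nonempty_count_eq_sum of_nat_sum rbb_expect_sum by simp
qed

lemma rbb_expect_nonempty_count_sq:
  assumes L: "1 < L" and st: "rbb_stationary L N \<nu>"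
  shows "rbb_expect L N \<nu> (\<lambda>\<eta>. real (nonempty_count L \<eta>) ^ 2)
       = real L * rbb_expect L N \<nu> (\<lambda>\<eta>. real (occ \<eta> 0))
         + real L * (real L - 1) * rbb_expect L N \<nu> (\<lambda>\<eta>. real (occ \<eta> 0) * real (occ \<eta> 1))"
proof -
  let ?E = "rbb_expect L N \<nu>"
  define e where "e = ?E (\<lambda>\<eta>. real (occ \<eta> 0))"
  define q where "q = ?E (\<lambda>\<eta>. real (occ \<eta> 0) * real (occ \<eta> 1))"
  have row: "(\<Sum>j<L. ?E (\<lambda>\<eta>. real (occ \<eta> i) * real (occ \<eta> j))) = e + (real L - 1) * q"
    if i: "i < L" for i
  proof -
    have "(\<lambda>\<eta>. real (occ \<eta> i) * real (occ \<eta> i)) = (\<lambda>\<eta>. real (occ \<eta> i))"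
      by (simp add: occ_def fun_eq_iff)
    then have "?E (\<lambda>\<eta>. real (occ \<eta> i) * real (occ \<eta> i)) = ?E (\<lambda>\<eta>. real (occ \<eta> i))"
      by (rule arg_cong)
    also have "\<dots> = e" unfolding e_def using rbb_expect_occ[OF _ st i] L by simp
    finally have diagonal: "?E (\<lambda>\<eta>. real (occ \<eta> i) * real (occ \<eta> i)) = e" .
    have "(\<Sum>j\<in>{..<L} - {i}. ?E (\<lambda>\<eta>. real (occ \<eta> i) * real (occ \<eta> j))) = (\<Sum>j\<in>{..<L} - {i}. q)"
      unfolding q_def using i by (intro sum.cong refl rbb_expect_occ_pair[OF L st]) auto
    then show ?thesis using i diagonal by (simp add: sum.remove[of "{..<L}" i] of_nat_diff)
  qed
  have "?E (\<lambda>\<eta>. real (nonempty_count L \<eta>) ^ 2)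
      = (\<Sum>i<L. \<Sum>j<L. ?E (\<lambda>\<eta>. real (occ \<eta> i) * real (occ \<eta> j)))"
    unfolding nonempty_count_eq_sum of_nat_sum power2_eq_square sum_product rbb_expect_sum ..
  also have "\<dots> = real L * (e + (real L - 1) * q)" using row by simp
  finally show ?thesis unfolding e_def q_def by (simp add: algebra_simps)
qed

lemma rbb_stationary_nonempty_count_moments:
  assumes L: "0 < L" and st: "rbb_stationary L N \<nu>"
  shows "rbb_expect L N \<nu> (\<lambda>\<eta>. real (nonempty_count L \<eta>) ^ 2)
       = (2 * real (L + N) - 1) * rbb_expect L N \<nu> (\<lambda>\<eta>. real (nonempty_count L \<eta>))
         - 2 * real N * real L"
proof -
  let ?S = "rbb_states L N"
  define Q where "Q \<eta> = (\<Sum>i<L. real (\<eta> i) ^ 2)" for \<eta> :: "nat \<Rightarrow> nat"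
  define D where "D \<eta> = (2 * real (L + N) - 1) * real (nonempty_count L \<eta>)
      - real (nonempty_count L \<eta>) ^ 2 - 2 * real N * real L" for \<eta>
  have "(\<Sum>\<eta>\<in>?S. \<nu> \<eta> * Q \<eta>) = (\<Sum>\<eta>\<in>?S. \<nu> \<eta> * (\<Sum>\<eta>'\<in>?S. rbb_trans L \<eta> \<eta>' * Q \<eta>'))"
    using stationary_on_balance st unfolding rbb_stationary_iff by blast
  also have "\<dots> = (\<Sum>\<eta>\<in>?S. \<nu> \<eta> * Q \<eta>) + (\<Sum>\<eta>\<in>?S. \<nu> \<eta> * D \<eta>) / real L"
    using rbb_trans_sum_squares[OF L]
    by (simp add: Q_def D_def distrib_left sum.distrib sum_divide_distrib cong: sum.cong)
  finally have "(\<Sum>\<eta>\<in>?S. \<nu> \<eta> * D \<eta>) = 0" using L by simp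
  moreover have "(\<Sum>\<eta>\<in>?S. \<nu> \<eta> * D \<eta>)
      = (2 * real (L + N) - 1) * rbb_expect L N \<nu> (\<lambda>\<eta>. real (nonempty_count L \<eta>))
        - rbb_expect L N \<nu> (\<lambda>\<eta>. real (nonempty_count L \<eta>) ^ 2) - 2 * real N * real L * sum \<nu> ?S"
    unfolding D_def rbb_expect_def
    by (simp add: sum_subtractf sum_distrib_left sum_distrib_right right_diff_distrib mult_ac)
  moreover have "sum \<nu> ?S = 1" using st unfolding rbb_stationary_def by blast
  ultimately show ?thesis by simp
qed

theorem mainTheorem8:
  fixes r :: real and L N :: nat and \<nu> :: "(nat \<Rightarrow> nat) \<Rightarrow> real"
  assumes "r > 0" and "L \<ge> 2" and "real N = r * real L"
    and "rbb_stationary L N \<nu>"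
  shows "rbb_expect L N \<nu> (\<lambda>\<eta>. real (occ \<eta> 0) * real (occ \<eta> 1))
           - rbb_expect L N \<nu> (\<lambda>\<eta>. real (occ \<eta> 0)) * rbb_expect L N \<nu> (\<lambda>\<eta>. real (occ \<eta> 1))
         = - (rbb_expect L N \<nu> (\<lambda>\<eta>. real (occ \<eta> 0)))\<^sup>2
           + 2 * rbb_expect L N \<nu> (\<lambda>\<eta>. real (occ \<eta> 0)) * (((r + 1) * real L - 1) / (real L - 1))
           - 2 * r * (real L / (real L - 1))"
proof -
  have L0: "0 < L" and L1: "1 < L" using assms(2) by auto
  note st = assms(4)
  define e where "e = rbb_expect L N \<nu> (\<lambda>\<eta>. real (occ \<eta> 0))"
  define q where "q = rbb_expect L N \<nu> (\<lambda>\<eta>. real (occ \<eta> 0) * real (occ \<eta> 1))"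
  have "real L * e + real L * (real L - 1) * q
      = (2 * real (L + N) - 1) * (real L * e) - 2 * real N * real L"
    using rbb_stationary_nonempty_count_moments[OF L0 st] rbb_expect_nonempty_count[OF L0 st]
      rbb_expect_nonempty_count_sq[OF L1 st]
    unfolding e_def q_def by simp
  then have "real L * ((real L - 1) * q) = real L * (2 * e * ((r + 1) * real L - 1) - 2 * r * real L)"
    using assms(3) by (simp add: algebra_simps)
  then have "(real L - 1) * q = 2 * e * ((r + 1) * real L - 1) - 2 * r * real L"
    using L0 by simp
  then have "q = (2 * e * ((r + 1) * real L - 1) - 2 * r * real L) / (real L - 1)"
    using L1 by (simp add: eq_divide_eq mult.commute)
  then have "q = 2 * e * (((r + 1) * real L - 1) / (real L - 1)) - 2 * r * (real L / (real L - 1))"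
    by (simp only: times_divide_eq_right diff_divide_distrib[of "2 * e * ((r + 1) * real L - 1)"])
  moreover have "rbb_expect L N \<nu> (\<lambda>\<eta>. real (occ \<eta> 1)) = e"
    unfolding e_def using rbb_expect_occ[OF L0 st L1] .
  ultimately show ?thesis unfolding e_def[symmetric] q_def[symmetric] by (simp add: power2_eq_square)
qed

end
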